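(* Let $\alpha\in(0,1]$ and let $\{Z_i\}$ be an i.i.d. sequence of $\mathbb{R}^d$-valued random variables on a sublinear expectation space $(\Omega,\mathcal{H},\hat{\mathbb{E}})$ with $S_n=\sum_{i=1}^nZ_i$, and assume there is $0<\delta<\alpha$ with $M_\delta:=\sup_n\hat{\mathbb{E}}[|n^{-1/\alpha}S_n|^\delta]<\infty$. For $\phi\in C_{b,Lip}(\mathbb{R}^d)$ let $\hat{\mathbb{F}}[\phi]:=\sup_n\hat{\mathbb{E}}[\phi(S_n/\sqrt[\alpha]{n})]$. Then $\hat{\mathbb{F}}$ is a tight sublinear expectation on $(\mathbb{R}^d,C_{b,Lip}(\mathbb{R}^d))$.
   Context: Sublinear expectation: a functional that is monotone, constant preserving, sub-additive and positively homogeneous; random variables need only satisfy $\varphi(X)\in\mathcal{H}$ for bounded Lipschitz $\varphi$. I.i.d. means each $Z_{i+1}$ has the same distribution as $Z_i$ and is independent from $(Z_1,\dots,Z_i)$ in the sublinear sense ($\hat{\mathbb{E}}[\varphi(X,Y)]=\hat{\mathbb{E}}[\hat{\mathbb{E}}[\varphi(x,Y)]_{x=X}]$). A sublinear expectation $\mathbb{E}$ on $(\mathbb{R}^n,C_{b,Lip}(\mathbb{R}^n))$ is tight if for each $\varepsilon>0$ there exist $N>0$ and $\varphi\in C_{b,Lip}(\mathbb{R}^n)$ with $\mathbb{1}_{\{|x|\ge N\}}\le\varphi$ and $\mathbb{E}[\varphi]<\varepsilon$. *)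

theory Defs
  imports "HOL-Analysis.Analysis"
begin

definition sublinear_expectation :: "('w \<Rightarrow> real) set \<Rightarrow> (('w \<Rightarrow> real) \<Rightarrow> real) \<Rightarrow> bool" where
  "sublinear_expectation H E \<longleftrightarrow>
     (\<forall>c. (\<lambda>_. c) \<in> H) \<and>
     (\<forall>X\<in>H. \<forall>Y\<in>H. (\<lambda>w. X w + Y w) \<in> H) \<and>
     (\<forall>X\<in>H. \<forall>c. (\<lambda>w. c * X w) \<in> H) \<and>
     (\<forall>X\<in>H. (\<lambda>w. \<bar>X w\<bar>) \<in> H) \<and>
     (\<forall>X\<in>H. \<forall>Y\<in>H. (\<forall>w. X w \<le> Y w) \<longrightarrow> E X \<le> E Y) \<and>
     (\<forall>c. E (\<lambda>_. c) = c) \<and>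
     (\<forall>X\<in>H. \<forall>Y\<in>H. E (\<lambda>w. X w + Y w) \<le> E X + E Y) \<and>
     (\<forall>X\<in>H. \<forall>c\<ge>0. E (\<lambda>w. c * X w) = c * E X)"

definition bounded_lip :: "('a::metric_space \<Rightarrow> real) \<Rightarrow> bool" where
  "bounded_lip \<phi> \<longleftrightarrow> bounded (range \<phi>) \<and> (\<exists>L. \<forall>x y. \<bar>\<phi> x - \<phi> y\<bar> \<le> L * dist x y)"

text \<open>C_{b,Lip}(R^{d k}): functions of a tuple (x_0,...,x_{k-1}) of R^d vectors, encoded as
  a function on nat => R^d that is bounded and Lipschitz w.r.t. the Euclidean norm of the
  first k components (hence depends only on them).\<close>
definition bounded_lip_tuple :: "nat \<Rightarrow> ((nat \<Rightarrow> real^'d) \<Rightarrow> real) \<Rightarrow> bool" where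
  "bounded_lip_tuple k \<phi> \<longleftrightarrow> bounded (range \<phi>) \<and>
     (\<exists>L. \<forall>x y. \<bar>\<phi> x - \<phi> y\<bar> \<le> L * sqrt (\<Sum>j<k. (norm (x j - y j))^2))"

definition random_seq :: "('w \<Rightarrow> real) set \<Rightarrow> (nat \<Rightarrow> 'w \<Rightarrow> real^'d) \<Rightarrow> bool" where
  "random_seq H Z \<longleftrightarrow> (\<forall>k \<phi>. bounded_lip_tuple k \<phi> \<longrightarrow> (\<lambda>w. \<phi> (\<lambda>j. Z j w)) \<in> H)"

text \<open>i.i.d. in the sublinear sense: Z_{k+1} identically distributed as Z_k, and Z_k independent
  from (Z_0,...,Z_{k-1}) (0-based indexing).\<close>
definition iid_seq :: "(('w \<Rightarrow> real) \<Rightarrow> real) \<Rightarrow> (nat \<Rightarrow> 'w \<Rightarrow> real^'d) \<Rightarrow> bool" where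
  "iid_seq E Z \<longleftrightarrow>
     (\<forall>i \<phi>. bounded_lip \<phi> \<longrightarrow> E (\<lambda>w. \<phi> (Z (Suc i) w)) = E (\<lambda>w. \<phi> (Z i w))) \<and>
     (\<forall>k \<phi>. bounded_lip_tuple (Suc k) \<phi> \<longrightarrow>
        E (\<lambda>w. \<phi> (\<lambda>j. Z j w)) = E (\<lambda>w. E (\<lambda>w'. \<phi> ((\<lambda>j. Z j w)(k := Z k w')))))"

definition scaled_sum :: "real \<Rightarrow> (nat \<Rightarrow> 'w \<Rightarrow> real^'d) \<Rightarrow> nat \<Rightarrow> 'w \<Rightarrow> real^'d" where
  "scaled_sum \<alpha> Z n w = (1 / (real n powr (1 / \<alpha>))) *\<^sub>R (\<Sum>i<n. Z i w)"

definition tight :: "((real^'d \<Rightarrow> real) \<Rightarrow> real) \<Rightarrow> bool" where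
  "tight F \<longleftrightarrow> (\<forall>\<epsilon>>0. \<exists>N>0. \<exists>\<phi>. bounded_lip \<phi> \<and>
       (\<forall>x. (if norm x \<ge> N then 1 else 0) \<le> \<phi> x) \<and> F \<phi> < \<epsilon>)"

end

theory Submission
  imports Defs
begin

text \<open>For each \<open>n\<close>, \<open>\<phi> \<mapsto> E[\<phi>(S\<^sub>n/n\<^bsup>1/\<alpha>\<^esup>)]\<close> is a sublinear expectation on bounded
  Lipschitz functions (the distribution of the normalized sum), bounded by \<open>sup |\<phi>|\<close> uniformly
  in \<open>n\<close>; a pointwise supremum of such a bounded family is again a sublinear expectation.
  Tightness is a Markov inequality: the ramp \<open>\<phi>\<^sub>a \<ge> 1{|x| \<ge> a + 1}\<close> satisfies
  \<open>a\<^sup>\<delta> \<phi>\<^sub>a(x) \<le> |x|\<^sup>\<delta>\<close>, so \<open>F[\<phi>\<^sub>a] \<le> M\<^sub>\<delta> / a\<^sup>\<delta>\<close>.\<close>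

lemma bounded_lipI:
  assumes "\<And>x. \<bar>\<phi> x\<bar> \<le> B" "L-lipschitz_on UNIV \<phi>"
  shows "bounded_lip \<phi>"
proof -
  have "bounded (range \<phi>)" using assms(1) unfolding bounded_iff by auto
  moreover have "\<forall>x y. \<bar>\<phi> x - \<phi> y\<bar> \<le> L * dist x y"
    using lipschitz_onD[OF assms(2)] by (simp add: dist_real_def)
  ultimately show ?thesis unfolding bounded_lip_def by blast
qed

lemma bounded_lipE:
  assumes "bounded_lip \<phi>"
  obtains B L where "\<And>x. \<bar>\<phi> x\<bar> \<le> B" "L-lipschitz_on UNIV \<phi>"
proof -
  obtain B L where B: "\<forall>y\<in>range \<phi>. \<bar>y\<bar> \<le> B" and L: "\<forall>x y. \<bar>\<phi> x - \<phi> y\<bar> \<le> L * dist x y"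
    using assms unfolding bounded_lip_def bounded_iff by auto
  have "(max L 0)-lipschitz_on UNIV \<phi>"
    using L by (intro lipschitz_onI)
      (auto simp: dist_real_def intro: order_trans[OF _ mult_right_mono[OF max.cobounded1]])
  with B that show ?thesis by blast
qed

lemma bounded_lip_const: "bounded_lip (\<lambda>x. c)"
  by (rule bounded_lipI[where B = "\<bar>c\<bar>", OF _ lipschitz_on_constant]) simp

lemma bounded_lip_add:
  assumes "bounded_lip \<phi>" "bounded_lip \<psi>"
  shows "bounded_lip (\<lambda>x. \<phi> x + \<psi> x)"
proof -
  obtain B1 L1 where B1: "\<And>x. \<bar>\<phi> x\<bar> \<le> B1" and L1: "L1-lipschitz_on UNIV \<phi>"
    using assms(1) by (metis bounded_lipE)
  obtain B2 L2 where B2: "\<And>x. \<bar>\<psi> x\<bar> \<le> B2" and L2: "L2-lipschitz_on UNIV \<psi>"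
    using assms(2) by (metis bounded_lipE)
  show ?thesis
  proof (rule bounded_lipI[OF _ lipschitz_on_add[OF L1 L2]])
    show "\<bar>\<phi> x + \<psi> x\<bar> \<le> B1 + B2" for x
      using abs_triangle_ineq[of "\<phi> x" "\<psi> x"] B1[of x] B2[of x] by linarith
  qed
qed

lemma bounded_lip_cmult:
  assumes "bounded_lip \<phi>"
  shows "bounded_lip (\<lambda>x. c * \<phi> x)"
proof -
  obtain B L where B: "\<And>x. \<bar>\<phi> x\<bar> \<le> B" and L: "L-lipschitz_on UNIV \<phi>"
    using assms by (metis bounded_lipE)
  show ?thesis
  proof (rule bounded_lipI[OF _ lipschitz_on_cmult_real[OF L]])
    show "\<bar>c * \<phi> x\<bar> \<le> \<bar>c\<bar> * B" for x
      by (simp add: abs_mult B mult_left_mono)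
  qed
qed

lemma bounded_lip_abs:
  assumes "bounded_lip \<phi>"
  shows "bounded_lip (\<lambda>x. \<bar>\<phi> x\<bar>)"
proof -
  obtain B L where B: "\<And>x. \<bar>\<phi> x\<bar> \<le> B" and L: "L-lipschitz_on UNIV \<phi>"
    using assms by (metis bounded_lipE)
  have "1-lipschitz_on (range \<phi>) abs"
    by (intro lipschitz_onI) (auto simp: dist_real_def abs_triangle_ineq3)
  from lipschitz_on_compose2[OF L this] B show ?thesis
    by (intro bounded_lipI[where B = B]) auto
qed

lemma
  assumes "sublinear_expectation H E"
  shows sublinear_expectation_mono: "X \<in> H \<Longrightarrow> Y \<in> H \<Longrightarrow> (\<And>w. X w \<le> Y w) \<Longrightarrow> E X \<le> E Y"
    and sublinear_expectation_const: "E (\<lambda>_. c) = c"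
    and sublinear_expectation_add_le: "X \<in> H \<Longrightarrow> Y \<in> H \<Longrightarrow> E (\<lambda>w. X w + Y w) \<le> E X + E Y"
    and sublinear_expectation_cmult: "X \<in> H \<Longrightarrow> 0 \<le> c \<Longrightarrow> E (\<lambda>w. c * X w) = c * E X"
    and sublinear_expectation_const_closed: "(\<lambda>_. c) \<in> H"
    and sublinear_expectation_cmult_closed: "X \<in> H \<Longrightarrow> (\<lambda>w. c * X w) \<in> H"
  using assms unfolding sublinear_expectation_def by auto

lemma sublinear_expectation_le_const:
  assumes "sublinear_expectation H E" "X \<in> H" "\<And>w. X w \<le> c"
  shows "E X \<le> c"
  using sublinear_expectation_mono[OF assms(1,2) sublinear_expectation_const_closed[OF assms(1)]] assms(3)
  by (simp add: sublinear_expectation_const[OF assms(1)])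

lemma sublinear_expectation_distribution:
  fixes X :: "'w \<Rightarrow> 'a::metric_space"
  assumes "sublinear_expectation H E" "\<And>\<phi>. bounded_lip \<phi> \<Longrightarrow> (\<lambda>w. \<phi> (X w)) \<in> H"
  shows "sublinear_expectation {\<phi>. bounded_lip \<phi>} (\<lambda>\<phi>. E (\<lambda>w. \<phi> (X w)))"
  using assms unfolding sublinear_expectation_def
  by (simp add: bounded_lip_const bounded_lip_add bounded_lip_cmult bounded_lip_abs)

lemma cSUP_mult_left_nonneg:
  fixes f :: "'i \<Rightarrow> real"
  assumes "I \<noteq> {}" "bdd_above (f ` I)" "0 \<le> c"
  shows "(SUP i\<in>I. c * f i) = c * (SUP i\<in>I. f i)"
proof -
  have "c * Sup (f ` I) = (SUP s\<in>f ` I. c * s)"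
    using assms by (intro continuous_at_Sup_mono) (auto intro: monoI mult_left_mono continuous_intros)
  then show ?thesis by (simp add: image_image)
qed

lemma sublinear_expectation_SUP:
  assumes "I \<noteq> {}" and SE: "\<And>i. i \<in> I \<Longrightarrow> sublinear_expectation H (E i)"
    and bdd: "\<And>X. X \<in> H \<Longrightarrow> bdd_above ((\<lambda>i. E i X) ` I)"
  shows "sublinear_expectation H (\<lambda>X. SUP i\<in>I. E i X)"
proof -
  from \<open>I \<noteq> {}\<close> obtain i0 where "i0 \<in> I" by blast
  then have H: "(\<forall>c. (\<lambda>_. c) \<in> H) \<and> (\<forall>X\<in>H. \<forall>Y\<in>H. (\<lambda>w. X w + Y w) \<in> H) \<and>
      (\<forall>X\<in>H. \<forall>c. (\<lambda>w. c * X w) \<in> H) \<and> (\<forall>X\<in>H. (\<lambda>w. \<bar>X w\<bar>) \<in> H)"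
    using SE unfolding sublinear_expectation_def by blast
  show ?thesis
    unfolding sublinear_expectation_def
  proof (intro conjI ballI allI impI)
    show "(SUP i\<in>I. E i X) \<le> (SUP i\<in>I. E i Y)" if "X \<in> H" "Y \<in> H" "\<forall>w. X w \<le> Y w" for X Y
    proof (rule cSUP_mono[OF \<open>I \<noteq> {}\<close> bdd[OF \<open>Y \<in> H\<close>]])
      show "\<exists>j\<in>I. E i X \<le> E j Y" if "i \<in> I" for i
        using sublinear_expectation_mono[OF SE[OF \<open>i \<in> I\<close>] \<open>X \<in> H\<close> \<open>Y \<in> H\<close>] that
          \<open>\<forall>w. X w \<le> Y w\<close> by blast
    qed
    show "(SUP i\<in>I. E i (\<lambda>_. c)) = c" for c
    proof -
      have "(SUP i\<in>I. E i (\<lambda>_. c)) = (SUP i\<in>I. c)"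
        by (intro SUP_cong) (simp_all add: sublinear_expectation_const[OF SE])
      then show ?thesis using \<open>I \<noteq> {}\<close> by simp
    qed
    show "(SUP i\<in>I. E i (\<lambda>w. X w + Y w)) \<le> (SUP i\<in>I. E i X) + (SUP i\<in>I. E i Y)"
      if "X \<in> H" "Y \<in> H" for X Y
    proof (rule cSUP_least[OF \<open>I \<noteq> {}\<close>])
      fix i assume "i \<in> I"
      then have "E i (\<lambda>w. X w + Y w) \<le> E i X + E i Y"
        by (rule sublinear_expectation_add_le[OF SE that])
      also have "\<dots> \<le> (SUP i\<in>I. E i X) + (SUP i\<in>I. E i Y)"
        using \<open>i \<in> I\<close> that by (intro add_mono cSUP_upper bdd)
      finally show "E i (\<lambda>w. X w + Y w) \<le> \<dots>" .
    qed
    show "(SUP i\<in>I. E i (\<lambda>w. c * X w)) = c * (SUP i\<in>I. E i X)" if "X \<in> H" "0 \<le> c" for X c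
    proof -
      have "(SUP i\<in>I. E i (\<lambda>w. c * X w)) = (SUP i\<in>I. c * E i X)"
        using that by (intro SUP_cong) (simp_all add: sublinear_expectation_cmult[OF SE])
      then show ?thesis using that by (simp add: cSUP_mult_left_nonneg[OF \<open>I \<noteq> {}\<close> bdd])
    qed
  qed (use H in blast)+
qed

lemma sublinear_expectation_SUP_distributions:
  fixes X :: "'i \<Rightarrow> 'w \<Rightarrow> 'a::metric_space"
  assumes "sublinear_expectation H E" "I \<noteq> {}"
    and "\<And>i \<phi>. i \<in> I \<Longrightarrow> bounded_lip \<phi> \<Longrightarrow> (\<lambda>w. \<phi> (X i w)) \<in> H"
  shows "sublinear_expectation {\<phi>. bounded_lip \<phi>} (\<lambda>\<phi>. SUP i\<in>I. E (\<lambda>w. \<phi> (X i w)))"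
proof (rule sublinear_expectation_SUP)
  show "bdd_above ((\<lambda>i. E (\<lambda>w. \<phi> (X i w))) ` I)" if "\<phi> \<in> {\<phi>. bounded_lip \<phi>}" for \<phi>
  proof -
    from that have \<phi>: "bounded_lip \<phi>" by simp
    then obtain B where "\<And>x. \<phi> x \<le> B"
      by (metis abs_le_iff bounded_lipE)
    then have "E (\<lambda>w. \<phi> (X i w)) \<le> B" if "i \<in> I" for i
      by (rule sublinear_expectation_le_const[OF assms(1) assms(3)[OF that \<phi>]])
    then show ?thesis by (intro bdd_aboveI2)
  qed
  show "sublinear_expectation {\<phi>. bounded_lip \<phi>} (\<lambda>\<phi>. E (\<lambda>w. \<phi> (X i w)))" if "i \<in> I" for i
    using that by (intro sublinear_expectation_distribution[OF assms(1)] assms(3))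
qed fact

definition tail_ramp :: "real \<Rightarrow> 'a::real_normed_vector \<Rightarrow> real" where
  "tail_ramp a x = min 1 (max 0 (norm x - a))"

lemma bounded_lip_tail_ramp: "bounded_lip (tail_ramp a :: 'a::real_normed_vector \<Rightarrow> real)"
proof (rule bounded_lipI[where B = 1])
  show "\<bar>tail_ramp a x\<bar> \<le> 1" for x by (simp add: tail_ramp_def)
  show "1-lipschitz_on UNIV (tail_ramp a :: 'a \<Rightarrow> real)"
  proof (rule lipschitz_onI)
    fix x y :: 'a
    have "\<bar>norm x - norm y\<bar> \<le> dist x y" by (simp add: dist_norm norm_triangle_ineq3)
    then show "dist (tail_ramp a x) (tail_ramp a y) \<le> 1 * dist x y"
      by (auto simp: tail_ramp_def dist_real_def min_def max_def)
  qed simp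
qed

lemma indicator_le_tail_ramp: "(if norm x \<ge> a + 1 then 1 else 0) \<le> tail_ramp a x"
  by (simp add: tail_ramp_def)

lemma tail_ramp_le_norm_powr:
  assumes "0 < a" "0 \<le> \<delta>"
  shows "a powr \<delta> * tail_ramp a x \<le> norm x powr \<delta>"
proof (cases "norm x \<le> a")
  case False
  then have "a powr \<delta> \<le> norm x powr \<delta>" using assms by (intro powr_mono2) auto
  moreover have "0 \<le> tail_ramp a x" "tail_ramp a x \<le> 1" by (auto simp: tail_ramp_def)
  ultimately show ?thesis by (metis mult_left_le order_trans powr_ge_zero)
qed (simp add: tail_ramp_def)

lemma markov_tail_ramp:
  assumes "sublinear_expectation H E" "(\<lambda>w. tail_ramp a (X w)) \<in> H" "0 < a" "0 \<le> \<delta>"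
    and moment: "\<And>Y. Y \<in> H \<Longrightarrow> (\<forall>w. Y w \<le> norm (X w) powr \<delta>) \<Longrightarrow> E Y \<le> M"
  shows "a powr \<delta> * E (\<lambda>w. tail_ramp a (X w)) \<le> M"
proof -
  have "E (\<lambda>w. a powr \<delta> * tail_ramp a (X w)) \<le> M"
    using assms(3,4) by (intro moment sublinear_expectation_cmult_closed[OF assms(1,2)] allI
        tail_ramp_le_norm_powr)
  then show ?thesis by (simp add: sublinear_expectation_cmult[OF assms(1,2)])
qed

lemma tight_SUP_of_uniform_moment_bound:
  fixes X :: "'i \<Rightarrow> 'w \<Rightarrow> real^'d"
  assumes "sublinear_expectation H E" "I \<noteq> {}" "0 < \<delta>"
    and inH: "\<And>i \<phi>. i \<in> I \<Longrightarrow> bounded_lip \<phi> \<Longrightarrow> (\<lambda>w. \<phi> (X i w)) \<in> H"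
    and moment: "\<And>i Y. i \<in> I \<Longrightarrow> Y \<in> H \<Longrightarrow> (\<forall>w. Y w \<le> norm (X i w) powr \<delta>) \<Longrightarrow> E Y \<le> M"
  shows "tight (\<lambda>\<phi>. SUP i\<in>I. E (\<lambda>w. \<phi> (X i w)))"
  unfolding tight_def
proof (intro allI impI)
  fix \<epsilon> :: real assume "0 < \<epsilon>"
  define M' where "M' = max M 1"
  define a where "a = (2 * M' / \<epsilon>) powr (1 / \<delta>)"
  have "0 < M'" "0 < a" using \<open>0 < \<epsilon>\<close> by (auto simp: M'_def a_def)
  have a_powr: "a powr \<delta> = 2 * M' / \<epsilon>"
    using \<open>0 < M'\<close> \<open>0 < \<epsilon>\<close> \<open>0 < \<delta>\<close> by (simp add: a_def powr_powr)
  have "E (\<lambda>w. tail_ramp a (X i w)) \<le> \<epsilon> / 2" if "i \<in> I" for i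
  proof -
    have "a powr \<delta> * E (\<lambda>w. tail_ramp a (X i w)) \<le> M"
      using \<open>0 < \<delta>\<close> by (intro markov_tail_ramp[OF assms(1) inH[OF that bounded_lip_tail_ramp] \<open>0 < a\<close>]
          moment[OF that]) auto
    also have "M \<le> M'" by (simp add: M'_def)
    also have "M' = a powr \<delta> * (\<epsilon> / 2)" using a_powr \<open>0 < \<epsilon>\<close> by simp
    finally show ?thesis using \<open>0 < a\<close> by simp
  qed
  then have "(SUP i\<in>I. E (\<lambda>w. tail_ramp a (X i w))) \<le> \<epsilon> / 2"
    by (intro cSUP_least[OF \<open>I \<noteq> {}\<close>])
  then have "(SUP i\<in>I. E (\<lambda>w. tail_ramp a (X i w))) < \<epsilon>"
    using \<open>0 < \<epsilon>\<close> by linarith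
  moreover have "0 < a + 1" using \<open>0 < a\<close> by simp
  ultimately show "\<exists>N>0. \<exists>\<phi>. bounded_lip \<phi> \<and> (\<forall>x. (if N \<le> norm x then 1 else 0) \<le> \<phi> x)
      \<and> (SUP i\<in>I. E (\<lambda>w. \<phi> (X i w))) < \<epsilon>"
    using bounded_lip_tail_ramp indicator_le_tail_ramp by blast
qed

lemma norm_sum_le_sqrt_sum_squares:
  fixes v :: "nat \<Rightarrow> 'a::real_normed_vector"
  shows "norm (\<Sum>i<n. v i) \<le> real n * sqrt (\<Sum>j<n. (norm (v j))\<^sup>2)"
proof -
  have "norm (v i) \<le> sqrt (\<Sum>j<n. (norm (v j))\<^sup>2)" if "i < n" for i
    using that by (intro real_le_rsqrt member_le_sum) auto
  then have "(\<Sum>i<n. norm (v i)) \<le> (\<Sum>i<n. sqrt (\<Sum>j<n. (norm (v j))\<^sup>2))"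
    by (intro sum_mono) auto
  then show ?thesis using norm_sum[of v "{..<n}"] by simp
qed

lemma bounded_lip_tuple_scaled_sum:
  fixes \<phi> :: "real^'d \<Rightarrow> real"
  assumes "bounded_lip \<phi>"
  shows "bounded_lip_tuple n (\<lambda>x. \<phi> (c *\<^sub>R (\<Sum>i<n. x i)))"
  unfolding bounded_lip_tuple_def
proof
  obtain L where "L-lipschitz_on UNIV \<phi>"
    using assms by (metis bounded_lipE)
  then have L: "\<bar>\<phi> x - \<phi> y\<bar> \<le> L * norm (x - y)" "0 \<le> L" for x y
    using lipschitz_on_normD[of L UNIV \<phi>] lipschitz_on_nonneg by (auto simp: real_norm_def)
  show "bounded (range (\<lambda>x. \<phi> (c *\<^sub>R (\<Sum>i<n. x i))))"
    by (rule bounded_subset[of "range \<phi>"]) (use assms in \<open>auto simp: bounded_lip_def\<close>)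
  show "\<exists>K. \<forall>x y. \<bar>\<phi> (c *\<^sub>R (\<Sum>i<n. x i)) - \<phi> (c *\<^sub>R (\<Sum>i<n. y i))\<bar>
      \<le> K * sqrt (\<Sum>j<n. (norm (x j - y j))\<^sup>2)"
  proof (intro exI allI)
    fix x y :: "nat \<Rightarrow> real^'d"
    have "\<bar>\<phi> (c *\<^sub>R (\<Sum>i<n. x i)) - \<phi> (c *\<^sub>R (\<Sum>i<n. y i))\<bar> \<le> L * (\<bar>c\<bar> * norm (\<Sum>i<n. x i - y i))"
      using L(1)[of "c *\<^sub>R (\<Sum>i<n. x i)" "c *\<^sub>R (\<Sum>i<n. y i)"]
      by (simp add: sum_subtractf flip: scaleR_diff_right)
    also have "\<dots> \<le> L * (\<bar>c\<bar> * (real n * sqrt (\<Sum>j<n. (norm (x j - y j))\<^sup>2)))"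
      using L(2) by (intro mult_left_mono norm_sum_le_sqrt_sum_squares) auto
    finally show "\<bar>\<phi> (c *\<^sub>R (\<Sum>i<n. x i)) - \<phi> (c *\<^sub>R (\<Sum>i<n. y i))\<bar>
        \<le> (L * \<bar>c\<bar> * real n) * sqrt (\<Sum>j<n. (norm (x j - y j))\<^sup>2)"
      by (simp add: mult_ac)
  qed
qed

lemma random_seq_scaled_sum:
  assumes "random_seq H Z" "bounded_lip \<phi>"
  shows "(\<lambda>w. \<phi> (scaled_sum \<alpha> Z n w)) \<in> H"
  using assms bounded_lip_tuple_scaled_sum[OF assms(2)]
  unfolding random_seq_def scaled_sum_def by blast

theorem lemma4p2:
  fixes H :: "('w \<Rightarrow> real) set" and E :: "('w \<Rightarrow> real) \<Rightarrow> real"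
    and Z :: "nat \<Rightarrow> 'w \<Rightarrow> real^'d" and \<alpha> \<delta> :: real
  assumes "0 < \<alpha>" and "\<alpha> \<le> 1"
    and "sublinear_expectation H E"
    and "random_seq H Z"
    and "iid_seq E Z"
    and "0 < \<delta>" and "\<delta> < \<alpha>"
    and "\<exists>M. \<forall>n\<ge>1. \<forall>Y\<in>H. (\<forall>w. Y w \<le> norm (scaled_sum \<alpha> Z n w) powr \<delta>) \<longrightarrow> E Y \<le> M"
  shows "sublinear_expectation {\<phi>. bounded_lip \<phi>}
           (\<lambda>\<phi>::real^'d \<Rightarrow> real. SUP n\<in>{1::nat..}. E (\<lambda>w. \<phi> (scaled_sum \<alpha> Z n w)))
       \<and> tight (\<lambda>\<phi>::real^'d \<Rightarrow> real. SUP n\<in>{1::nat..}. E (\<lambda>w. \<phi> (scaled_sum \<alpha> Z n w)))"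
proof
  have inH: "\<And>n \<phi>. bounded_lip \<phi> \<Longrightarrow> (\<lambda>w. \<phi> (scaled_sum \<alpha> Z n w)) \<in> H"
    by (rule random_seq_scaled_sum[OF assms(4)])
  have "{1::nat..} \<noteq> {}" by auto
  then show "sublinear_expectation {\<phi>. bounded_lip \<phi>}
      (\<lambda>\<phi>::real^'d \<Rightarrow> real. SUP n\<in>{1::nat..}. E (\<lambda>w. \<phi> (scaled_sum \<alpha> Z n w)))"
    by (rule sublinear_expectation_SUP_distributions[OF assms(3) _ inH])
  obtain M where "\<forall>n\<ge>1. \<forall>Y\<in>H. (\<forall>w. Y w \<le> norm (scaled_sum \<alpha> Z n w) powr \<delta>) \<longrightarrow> E Y \<le> M"
    using assms(8) by blast
  with \<open>{1::nat..} \<noteq> {}\<close> show "tight (\<lambda>\<phi>::real^'d \<Rightarrow> real. SUP n\<in>{1::nat..}. E (\<lambda>w. \<phi> (scaled_sum \<alpha> Z n w)))"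
    by (intro tight_SUP_of_uniform_moment_bound[OF assms(3) _ assms(6) inH]) auto
qed

end
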